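(* With the setup in the context, fix $X\subseteq E\setminus B$ and for $0\le\mu\le n$ let $E_\mu=\min_{Y\subseteq E,\,|Y|=\mu}H(\mathbf{m}\mid\mathbf{t},\mathbf{M})$ and $\Delta_\mu=n-k-E_\mu$. For $0\le j\le n-|X|-k$ let $\sigma_j=\min\{|Y|: Y\subseteq E,\ \rho_X(Y)=j\}$, and set $\sigma_{n-|X|-k+1}=\infty$. Then for $0\le j\le n-|X|-k$, $\Delta_\mu=|X|+j\iff\sigma_j\le\mu<\sigma_{j+1}.$
   Context: An almost affine code over a finite alphabet $A$ of length $n$ and dimension $k$ is a subset $C\subseteq A^n$ with $|C|=|A|^k$ such that for every $X\subseteq E=\{1,\dots,n\}$, $\log_{|A|}|C_X|$ is a nonnegative integer ($C_X$ = projection onto coordinates $X$); its associated matroid $M_C$ has rank function $r(X)=\log_{|A|}|C_X|$. Setup: $C$ is an almost affine code of length $n$ and dimension $k$ over $A$ with matroid rank function $r$; $B\subseteq E$ is a basis of $M_C$; $\varphi:A\times A\to A$ is such that for every $y\in A$ both $\varphi(y,\cdot)$ and $\varphi(\cdot,y)$ are bijections. For $\mathbf{m}\in A^{E\setminus B}$, $\Phi_{\mathbf{m}}(\mathbf{w})_i=\mathbf{w}_i$ for $i\in B$ and $=\varphi(\mathbf{w}_i,\mathbf{m}_i)$ for $i\in E\setminus B$, and $C_{\mathbf{m}}=\Phi_{\mathbf{m}}(C)$. For $X\subseteq E\setminus B$, $\mathbf{M}\in A^X$, $D_{X,\mathbf{M}}=\bigcup_{\mathbf{m}_X=\mathbf{M}}C_{\mathbf{m}}$,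 with matroid rank function $r_D(Y)=|Y\setminus(B\cup X)|+r(Y\cap(B\cup X))$, and $\rho_X(Y)=r_D(Y)-r(Y)$ (a demi-matroid rank function of rank $n-|X|-k$). The random model: $\mathbf{m}\in A^{E\setminus B}$ uniform, then $\mathbf{w}\in C_{\mathbf{m}}$ uniform; $\mathbf{M}=\mathbf{m}_X$, $\mathbf{t}=\mathbf{w}_Y$; $H(\mathbf{m}\mid\mathbf{t},\mathbf{M})$ is the conditional entropy with logarithms to base $|A|$ (convention $0\log\frac10=0$). *)

theory Defs
  imports "HOL-Probability.Probability_Mass_Function" "HOL-Library.FuncSet" "HOL-Library.Extended_Nat"
begin

text \<open>Coordinates are E = {1..n}; words are extensional functions in PiE E (\<lambda>_. A).\<close>

definition proj :: "nat set \<Rightarrow> (nat \<Rightarrow> 'a) \<Rightarrow> (nat \<Rightarrow> 'a)" where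
  "proj X w = restrict w X"

definition almost_affine :: "'a set \<Rightarrow> nat \<Rightarrow> nat \<Rightarrow> (nat \<Rightarrow> 'a) set \<Rightarrow> bool" where
  "almost_affine A n k C \<longleftrightarrow>
     C \<subseteq> PiE {1..n} (\<lambda>_. A) \<and> card C = card A ^ k \<and>
     (\<forall>X \<subseteq> {1..n}. \<exists>r::nat. log (card A) (real (card (proj X ` C))) = real r)"

definition code_rank :: "'a set \<Rightarrow> (nat \<Rightarrow> 'a) set \<Rightarrow> nat set \<Rightarrow> real" where
  "code_rank A C X = log (card A) (real (card (proj X ` C)))"

definition code_basis :: "'a set \<Rightarrow> nat \<Rightarrow> (nat \<Rightarrow> 'a) set \<Rightarrow> nat set \<Rightarrow> bool" where
  "code_basis A n C B \<longleftrightarrow>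
     B \<subseteq> {1..n} \<and> code_rank A C B = real (card B) \<and>
     (\<forall>I. B \<subset> I \<and> I \<subseteq> {1..n} \<longrightarrow> code_rank A C I \<noteq> real (card I))"

definition Phi :: "('a \<Rightarrow> 'a \<Rightarrow> 'a) \<Rightarrow> nat \<Rightarrow> nat set \<Rightarrow> (nat \<Rightarrow> 'a) \<Rightarrow> (nat \<Rightarrow> 'a) \<Rightarrow> (nat \<Rightarrow> 'a)" where
  "Phi \<phi> n B m w = restrict (\<lambda>i. if i \<in> B then w i else \<phi> (w i) (m i)) {1..n}"

definition code_m :: "('a \<Rightarrow> 'a \<Rightarrow> 'a) \<Rightarrow> nat \<Rightarrow> nat set \<Rightarrow> (nat \<Rightarrow> 'a) set \<Rightarrow> (nat \<Rightarrow> 'a) \<Rightarrow> (nat \<Rightarrow> 'a) set" where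
  "code_m \<phi> n B C m = Phi \<phi> n B m ` C"

definition model_pmf :: "'a set \<Rightarrow> ('a \<Rightarrow> 'a \<Rightarrow> 'a) \<Rightarrow> nat \<Rightarrow> nat set \<Rightarrow> (nat \<Rightarrow> 'a) set
    \<Rightarrow> ((nat \<Rightarrow> 'a) \<times> (nat \<Rightarrow> 'a)) pmf" where
  "model_pmf A \<phi> n B C =
     bind_pmf (pmf_of_set (PiE ({1..n} - B) (\<lambda>_. A)))
       (\<lambda>m. map_pmf (\<lambda>w. (m, w)) (pmf_of_set (code_m \<phi> n B C m)))"

text \<open>Conditional entropy H(F | G) of discrete random variables F, G on a pmf,
  logarithms to base b, with the convention 0 log (1/0) = 0 (sum over the support).\<close>
definition cond_entropy :: "real \<Rightarrow> 'w pmf \<Rightarrow> ('w \<Rightarrow> 'x) \<Rightarrow> ('w \<Rightarrow> 'y) \<Rightarrow> real" where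
  "cond_entropy b p F G =
     (\<Sum>z \<in> set_pmf (map_pmf (\<lambda>\<omega>. (F \<omega>, G \<omega>)) p).
        pmf (map_pmf (\<lambda>\<omega>. (F \<omega>, G \<omega>)) p) z *
        log b (pmf (map_pmf G p) (snd z) / pmf (map_pmf (\<lambda>\<omega>. (F \<omega>, G \<omega>)) p) z))"

text \<open>H(m | t, M) with t = w_Y and M = m_X.\<close>
definition H_mtM :: "'a set \<Rightarrow> ('a \<Rightarrow> 'a \<Rightarrow> 'a) \<Rightarrow> nat \<Rightarrow> nat set \<Rightarrow> (nat \<Rightarrow> 'a) set
    \<Rightarrow> nat set \<Rightarrow> nat set \<Rightarrow> real" where
  "H_mtM A \<phi> n B C X Y =
     cond_entropy (card A) (model_pmf A \<phi> n B C) fst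
       (\<lambda>(m, w). (proj Y w, proj X m))"

definition E_mu :: "'a set \<Rightarrow> ('a \<Rightarrow> 'a \<Rightarrow> 'a) \<Rightarrow> nat \<Rightarrow> nat set \<Rightarrow> (nat \<Rightarrow> 'a) set
    \<Rightarrow> nat set \<Rightarrow> nat \<Rightarrow> real" where
  "E_mu A \<phi> n B C X \<mu> = Min {H_mtM A \<phi> n B C X Y | Y. Y \<subseteq> {1..n} \<and> card Y = \<mu>}"

definition Delta_mu :: "'a set \<Rightarrow> ('a \<Rightarrow> 'a \<Rightarrow> 'a) \<Rightarrow> nat \<Rightarrow> nat \<Rightarrow> nat set \<Rightarrow> (nat \<Rightarrow> 'a) set
    \<Rightarrow> nat set \<Rightarrow> nat \<Rightarrow> real" where
  "Delta_mu A \<phi> n k B C X \<mu> = real n - real k - E_mu A \<phi> n B C X \<mu>"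

definition rank_D :: "'a set \<Rightarrow> (nat \<Rightarrow> 'a) set \<Rightarrow> nat set \<Rightarrow> nat set \<Rightarrow> nat set \<Rightarrow> real" where
  "rank_D A C B X Y = real (card (Y - (B \<union> X))) + code_rank A C (Y \<inter> (B \<union> X))"

definition rho :: "'a set \<Rightarrow> (nat \<Rightarrow> 'a) set \<Rightarrow> nat set \<Rightarrow> nat set \<Rightarrow> nat set \<Rightarrow> real" where
  "rho A C B X Y = rank_D A C B X Y - code_rank A C Y"

definition sigma :: "'a set \<Rightarrow> nat \<Rightarrow> nat \<Rightarrow> (nat \<Rightarrow> 'a) set \<Rightarrow> nat set \<Rightarrow> nat set \<Rightarrow> nat \<Rightarrow> enat" where
  "sigma A n k C B X j =
     (if j = n - card X - k + 1 then \<infinity>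
      else (INF Y \<in> {Y. Y \<subseteq> {1..n} \<and> rho A C B X Y = real j}. enat (card Y)))"

end

theory Submission
  imports Defs
begin

text \<open>
  For an almost affine code every projection C \<rightarrow> C_Y has fibres of the same size
  q^(k - r(Y)): the numbers of one-coordinate extensions of the words of C_Y are between 1 and q
  and average to 1 or q, hence are constant. In the random model (m, c) is uniform on
  A^(E-B) \<times> C and the transmitted word is \<Phi>_m(c). Because \<phi> is a Latin square, seeing w_Y and m_X
  fixes c on Y \<inter> (B \<union> X), determines m_i for each i \<in> (X \<union> Y) - B and leaves the remaining m_i
  free. Joint and marginal laws are therefore uniform on their supports, their ratio is constant,
  and H(m | t, M) = n - k - |X| - \<rho>_X(Y), so that \<Delta>_\<mu> = |X| + max {\<rho>_X(Y) : |Y| = \<mu>}.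
  Finally \<rho>_X vanishes on the empty set and grows by 0 or 1 when a coordinate is added (a coordinate
  determined by a subset of Y is determined by Y), so by a discrete intermediate value argument
  the maximum over \<mu>-sets equals j exactly when \<sigma>_j \<le> \<mu> < \<sigma>_(j+1).
\<close>

section \<open>Counting and uniform distributions\<close>

lemma card_eq_sum_card_fibers:
  assumes "finite S"
  shows "card S = (\<Sum>y\<in>f ` S. card {x\<in>S. f x = y})"
  using sum.image_gen[OF assms, of "\<lambda>_. 1::nat" f] by simp

lemma eq_const_if_sum_eq_upper:
  fixes f :: "'b \<Rightarrow> nat"
  assumes "finite S" "\<forall>x\<in>S. f x \<le> c" "sum f S = c * card S" "x \<in> S"
  shows "f x = c"
proof (rule ccontr)
  assume "f x \<noteq> c"
  with assms have "f x < c" by auto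
  with assms have "sum f S < sum (\<lambda>_. c) S" by (intro sum_strict_mono_ex1) auto
  with assms show False by simp
qed

lemma eq_const_if_sum_eq_lower:
  fixes f :: "'b \<Rightarrow> nat"
  assumes "finite S" "\<forall>x\<in>S. c \<le> f x" "sum f S = c * card S" "x \<in> S"
  shows "f x = c"
proof (rule ccontr)
  assume "f x \<noteq> c"
  with assms have "c < f x" by auto
  with assms have "sum (\<lambda>_. c) S < sum f S" by (intro sum_strict_mono_ex1) auto
  with assms show False by simp
qed

lemma card_filter_PiE:
  assumes "finite I"
  shows "card {m \<in> PiE I F. \<forall>i\<in>I. P i (m i)} = (\<Prod>i\<in>I. card {a \<in> F i. P i a})"
proof -
  have "{m \<in> PiE I F. \<forall>i\<in>I. P i (m i)} = PiE I (\<lambda>i. {a \<in> F i. P i a})"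
    by (auto simp: PiE_def Pi_def)
  then show ?thesis using assms by (simp add: card_PiE)
qed

lemma card_bij_betw_fiber:
  assumes "bij_betw f A B" "b \<in> B"
  shows "card {a \<in> A. f a = b} = 1"
proof -
  obtain a where "a \<in> A" "f a = b" using assms by (auto simp: bij_betw_def)
  with assms have "{a' \<in> A. f a' = b} = {a}" by (auto simp: bij_betw_def inj_on_def)
  then show ?thesis by simp
qed

lemma proj_eq_iff: "proj Y c = proj Y c' \<longleftrightarrow> (\<forall>i\<in>Y. c i = c' i)"
  unfolding proj_def by (auto simp: fun_eq_iff restrict_def)

lemma restrict_proj: "Y \<subseteq> Y' \<Longrightarrow> restrict (proj Y' c) Y = proj Y c"
  unfolding proj_def by (simp add: Int_absorb1)

lemma pmf_map_pmf_of_set: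
  assumes "finite P" "P \<noteq> {}"
  shows "pmf (map_pmf f (pmf_of_set P)) z = real (card {x\<in>P. f x = z}) / real (card P)"
proof -
  have "P \<inter> f -` {z} = {x\<in>P. f x = z}" by auto
  then show ?thesis using assms by (simp add: pmf_map measure_pmf_of_set)
qed

lemma pmf_of_set_Times:
  assumes "finite S" "S \<noteq> {}" "finite T" "T \<noteq> {}"
  shows "pmf_of_set (S \<times> T) = pair_pmf (pmf_of_set S) (pmf_of_set T)"
proof (rule pmf_eqI)
  fix z :: "'a \<times> 'b"
  obtain a b where "z = (a, b)" by force
  then show "pmf (pmf_of_set (S \<times> T)) z = pmf (pair_pmf (pmf_of_set S) (pmf_of_set T)) z"
    using assms by (simp add: pmf_pair card_cartesian_product indicator_def)
qed

lemma log_ratio_of_powers: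
  assumes "1 < b"
  shows "log b (real (b ^ i * b ^ j) / real (b ^ l)) = real i + real j - real l"
  using assms by (simp add: log_divide log_mult log_nat_power)

lemma cond_entropy_eq_const:
  assumes "finite (set_pmf p)"
    and "\<And>z. z \<in> set_pmf (map_pmf (\<lambda>\<omega>. (F \<omega>, G \<omega>)) p) \<Longrightarrow>
           log b (pmf (map_pmf G p) (snd z) / pmf (map_pmf (\<lambda>\<omega>. (F \<omega>, G \<omega>)) p) z) = L"
  shows "cond_entropy b p F G = L"
proof -
  let ?J = "map_pmf (\<lambda>\<omega>. (F \<omega>, G \<omega>)) p"
  have "cond_entropy b p F G = (\<Sum>z\<in>set_pmf ?J. pmf ?J z * L)"
    unfolding cond_entropy_def by (rule sum.cong) (simp_all add: assms(2))
  also have "\<dots> = L * (\<Sum>z\<in>set_pmf ?J. pmf ?J z)" by (simp add: sum_distrib_left mult.commute)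
  also have "(\<Sum>z\<in>set_pmf ?J. pmf ?J z) = 1"
    by (rule sum_pmf_eq_1) (use assms(1) in auto)
  finally show ?thesis by simp
qed

section \<open>Set functions growing by at most one\<close>

text \<open>This is \<sigma>_j for an arbitrary set function; an empty level has infimum \<infinity>.\<close>
definition min_card_level :: "('b set \<Rightarrow> int) \<Rightarrow> 'b set \<Rightarrow> int \<Rightarrow> enat" where
  "min_card_level f E j = (INF Y \<in> {Y. Y \<subseteq> E \<and> f Y = j}. enat (card Y))"

locale unit_increasing =
  fixes f :: "'b set \<Rightarrow> int" and E :: "'b set"
  assumes finite_ground: "finite E"
    and f_empty: "f {} = 0"
    and insert_bounds: "\<And>Y e. Y \<subseteq> E \<Longrightarrow> e \<in> E \<Longrightarrow> f Y \<le> f (insert e Y) \<and> f (insert e Y) \<le> f Y + 1"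
begin

lemma le_union: "finite D \<Longrightarrow> Y \<union> D \<subseteq> E \<Longrightarrow> f Y \<le> f (Y \<union> D)"
proof (induction D rule: finite_induct)
  case (insert e D)
  then have "f Y \<le> f (Y \<union> D)" by auto
  also have "\<dots> \<le> f (insert e (Y \<union> D))" using insert.prems insert_bounds by auto
  finally show ?case by simp
qed simp

lemma mono: "Y \<subseteq> Y' \<Longrightarrow> Y' \<subseteq> E \<Longrightarrow> f Y \<le> f Y'"
  using le_union[of "Y' - Y" Y] finite_ground finite_subset by (metis Diff_partition Diff_subset order_trans)

lemma intermediate_value:
  "Y \<subseteq> E \<Longrightarrow> 0 \<le> j \<Longrightarrow> j \<le> f Y \<Longrightarrow> \<exists>Y' \<subseteq> Y. f Y' = j"
proof (induction Y arbitrary: j rule: infinite_finite_induct)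
  case (infinite Y)
  then show ?case using finite_ground finite_subset by blast
next
  case empty
  then show ?case using f_empty by auto
next
  case (insert e Y)
  show ?case
  proof (cases "j \<le> f Y")
    case True
    with insert show ?thesis by blast
  next
    case False
    with insert.prems insert_bounds[of Y e] have "f (insert e Y) = j" by auto
    then show ?thesis by blast
  qed
qed

lemma min_card_level_le_iff:
  assumes "0 \<le> j" "\<mu> \<le> card E"
  shows "min_card_level f E j \<le> enat \<mu> \<longleftrightarrow> (\<exists>Y \<subseteq> E. card Y = \<mu> \<and> j \<le> f Y)"
proof
  assume "min_card_level f E j \<le> enat \<mu>"
  then have "min_card_level f E j < enat (Suc \<mu>)" by (simp add: le_less_trans)
  then obtain Y where Y: "Y \<subseteq> E" "f Y = j" "card Y \<le> \<mu>"
    by (auto simp: min_card_level_def INF_less_iff)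
  then obtain Y' where Y': "Y \<subseteq> Y'" "Y' \<subseteq> E" "card Y' = \<mu>"
    using exists_subset_between[OF _ assms(2) _ finite_ground] by blast
  then have "j \<le> f Y'" using Y mono[OF Y'(1,2)] by simp
  with Y' show "\<exists>Y \<subseteq> E. card Y = \<mu> \<and> j \<le> f Y" by blast
next
  assume "\<exists>Y \<subseteq> E. card Y = \<mu> \<and> j \<le> f Y"
  then obtain Y where Y: "Y \<subseteq> E" "card Y = \<mu>" "j \<le> f Y" by blast
  then obtain Y' where Y': "Y' \<subseteq> Y" "f Y' = j" using intermediate_value assms(1) by blast
  then have "min_card_level f E j \<le> enat (card Y')"
    unfolding min_card_level_def using Y by (intro INF_lower) auto
  also have "card Y' \<le> \<mu>"
    using card_mono[OF finite_subset[OF Y(1) finite_ground] Y'(1)] Y(2) by simp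
  finally show "min_card_level f E j \<le> enat \<mu>" by simp
qed

lemma max_eq_iff_min_card_level:
  assumes "0 \<le> j" "\<mu> \<le> card E"
  shows "(\<exists>Y \<subseteq> E. card Y = \<mu> \<and> f Y = j) \<and> (\<forall>Y \<subseteq> E. card Y = \<mu> \<longrightarrow> f Y \<le> j) \<longleftrightarrow>
    min_card_level f E j \<le> enat \<mu> \<and> enat \<mu> < min_card_level f E (j + 1)"
proof -
  have "enat \<mu> < min_card_level f E (j + 1) \<longleftrightarrow> \<not> (\<exists>Y \<subseteq> E. card Y = \<mu> \<and> j + 1 \<le> f Y)"
    using min_card_level_le_iff[of "j + 1"] assms by (simp add: not_le[symmetric])
  moreover have "(\<forall>Y \<subseteq> E. card Y = \<mu> \<longrightarrow> f Y \<le> j) \<longleftrightarrow> \<not> (\<exists>Y \<subseteq> E. card Y = \<mu> \<and> j + 1 \<le> f Y)"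
    by auto
  ultimately show ?thesis
    unfolding min_card_level_le_iff[OF assms] by (auto intro: order.antisym)
qed

end

section \<open>Fibres and rank of an almost affine code\<close>

locale almost_affine_code =
  fixes A :: "'a set" and n k :: nat and C :: "(nat \<Rightarrow> 'a) set"
  assumes finite_alphabet: "finite A"
    and card_alphabet: "2 \<le> card A"
    and almost_affine: "almost_affine A n k C"
begin

abbreviation q :: nat where "q \<equiv> card A"
abbreviation E :: "nat set" where "E \<equiv> {1..n}"

definition proj_card :: "nat set \<Rightarrow> nat" where
  "proj_card Y = card (proj Y ` C)"

definition fiber :: "nat set \<Rightarrow> (nat \<Rightarrow> 'a) \<Rightarrow> (nat \<Rightarrow> 'a) set" where
  "fiber Y c = {c' \<in> C. proj Y c' = proj Y c}"

lemma code_subset: "C \<subseteq> PiE E (\<lambda>_. A)"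
  using almost_affine unfolding almost_affine_def by blast

lemma finite_code: "finite C"
  using finite_subset[OF code_subset] finite_alphabet by (simp add: finite_PiE)

lemma card_code: "card C = q ^ k"
  using almost_affine unfolding almost_affine_def by blast

lemma q_gt_1: "1 < q"
  using card_alphabet by simp

lemma code_nonempty: "C \<noteq> {}"
  using card_code q_gt_1 by auto

lemma code_mem: "c \<in> C \<Longrightarrow> i \<in> E \<Longrightarrow> c i \<in> A"
  using code_subset by (auto simp: PiE_iff)

lemma proj_ground: "c \<in> C \<Longrightarrow> proj E c = c"
  using code_subset unfolding proj_def by (meson PiE_restrict subsetD)

lemma proj_card_pos: "0 < proj_card Y"
  unfolding proj_card_def using finite_code code_nonempty by (simp add: card_gt_0_iff)

lemma proj_card_mono: "Y \<subseteq> Y' \<Longrightarrow> proj_card Y \<le> proj_card Y'"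
proof -
  assume "Y \<subseteq> Y'"
  then have "proj Y ` C = (\<lambda>y. restrict y Y) ` proj Y' ` C"
    by (simp add: image_image restrict_proj)
  then show ?thesis unfolding proj_card_def by (simp add: card_image_le finite_code)
qed

lemma proj_card_ground: "proj_card E = card C"
proof -
  have "proj E ` C = C" using proj_ground by force
  then show ?thesis unfolding proj_card_def by simp
qed

lemma ex_proj_card_eq_power: "Y \<subseteq> E \<Longrightarrow> \<exists>r. proj_card Y = q ^ r"
proof -
  assume "Y \<subseteq> E"
  then obtain r :: nat where r: "log q (proj_card Y) = r"
    using almost_affine unfolding almost_affine_def proj_card_def by blast
  have "real (proj_card Y) = real q powr log q (proj_card Y)"
    using q_gt_1 proj_card_pos by (intro powr_log_cancel[symmetric]) auto
  also have "\<dots> = real (q ^ r)"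
    using q_gt_1 by (simp add: r powr_realpow)
  finally show ?thesis by (intro exI[of _ r]) simp
qed

definition rk :: "nat set \<Rightarrow> nat" where
  "rk Y = (THE r. proj_card Y = q ^ r)"

lemma proj_card_eq_power: "Y \<subseteq> E \<Longrightarrow> proj_card Y = q ^ rk Y"
proof -
  assume "Y \<subseteq> E"
  then obtain r where r: "proj_card Y = q ^ r" using ex_proj_card_eq_power by blast
  have "rk Y = r"
    unfolding rk_def by (rule the_equality) (use r q_gt_1 in \<open>auto simp: power_inject_exp\<close>)
  with r show ?thesis by simp
qed

lemma rk_le_iff: "Y \<subseteq> E \<Longrightarrow> Y' \<subseteq> E \<Longrightarrow> rk Y \<le> rk Y' \<longleftrightarrow> proj_card Y \<le> proj_card Y'"
  using q_gt_1 by (simp add: proj_card_eq_power)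

lemma rk_eq_iff: "Y \<subseteq> E \<Longrightarrow> Y' \<subseteq> E \<Longrightarrow> rk Y = rk Y' \<longleftrightarrow> proj_card Y = proj_card Y'"
  using q_gt_1 by (simp add: proj_card_eq_power)

lemma code_rank_eq: "Y \<subseteq> E \<Longrightarrow> code_rank A C Y = real (rk Y)"
  unfolding code_rank_def using q_gt_1
  by (simp add: proj_card_eq_power[unfolded proj_card_def] log_nat_power)

lemma rk_mono: "Y \<subseteq> Y' \<Longrightarrow> Y' \<subseteq> E \<Longrightarrow> rk Y \<le> rk Y'"
  using rk_le_iff[of Y Y'] proj_card_mono[of Y Y'] by auto

lemma rk_ground: "rk E = k"
  using proj_card_eq_power[of E] proj_card_ground card_code q_gt_1 by (simp add: power_inject_exp)

lemma rk_le: "Y \<subseteq> E \<Longrightarrow> rk Y \<le> k"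
  using rk_mono[of Y E] rk_ground by simp

lemma rk_empty: "rk {} = 0"
proof -
  have "proj {} c = (\<lambda>_. undefined)" for c
    unfolding proj_def by auto
  then have "proj {} ` C = {\<lambda>_. undefined}"
    using code_nonempty by auto
  then have "proj_card {} = q ^ 0" unfolding proj_card_def by simp
  then show ?thesis using proj_card_eq_power[of "{}"] q_gt_1 by (simp add: power_inject_exp)
qed

lemma card_extensions_le:
  assumes "e \<in> E"
  shows "card {y \<in> proj (insert e Y) ` C. restrict y Y = x} \<le> q"
proof -
  let ?S = "{y \<in> proj (insert e Y) ` C. restrict y Y = x}"
  have "inj_on (\<lambda>y. y e) ?S"
  proof (rule inj_onI)
    fix y y' assume "y \<in> ?S" "y' \<in> ?S" "y e = y' e"
    then show "y = y'" unfolding proj_def by (auto simp: fun_eq_iff restrict_def split: if_splits)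
  qed
  moreover have "(\<lambda>y. y e) ` ?S \<subseteq> A"
    using assms code_mem unfolding proj_def by auto
  ultimately show ?thesis using finite_alphabet by (rule card_inj_on_le)
qed

lemma sum_card_extensions:
  assumes "Y \<subseteq> Y'"
  shows "(\<Sum>x \<in> proj Y ` C. card {y \<in> proj Y' ` C. restrict y Y = x}) = proj_card Y'"
proof -
  have "(\<lambda>y. restrict y Y) ` proj Y' ` C = proj Y ` C"
    by (simp add: image_image restrict_proj[OF assms])
  then show ?thesis
    unfolding proj_card_def using card_eq_sum_card_fibers[of "proj Y' ` C" "\<lambda>y. restrict y Y"]
    by (simp add: finite_code)
qed

lemma proj_card_insert_le: "e \<in> E \<Longrightarrow> proj_card (insert e Y) \<le> q * proj_card Y"
  using sum_card_extensions[of Y "insert e Y"] card_extensions_le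
    sum_bounded_above[of "proj Y ` C" "\<lambda>x. card {y \<in> proj (insert e Y) ` C. restrict y Y = x}" q]
  unfolding proj_card_def by (simp add: subset_insertI mult.commute)

lemma rk_insert:
  assumes "Y \<subseteq> E" "e \<in> E"
  shows "rk Y \<le> rk (insert e Y) \<and> rk (insert e Y) \<le> rk Y + 1"
proof -
  have "q ^ rk (insert e Y) \<le> q ^ (rk Y + 1)"
    using proj_card_insert_le[OF assms(2), of Y] assms by (simp add: proj_card_eq_power)
  then have "rk (insert e Y) \<le> rk Y + 1" by (rule power_le_imp_le_exp[OF q_gt_1])
  moreover have "rk Y \<le> rk (insert e Y)" using assms by (intro rk_mono) auto
  ultimately show ?thesis by simp
qed

lemma card_extensions:
  assumes "Y \<subseteq> E" "e \<in> E" "x \<in> proj Y ` C"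
  shows "card {y \<in> proj (insert e Y) ` C. restrict y Y = x} * proj_card Y = proj_card (insert e Y)"
proof -
  define ext where "ext x = card {y \<in> proj (insert e Y) ` C. restrict y Y = x}" for x
  have sum: "(\<Sum>x \<in> proj Y ` C. ext x) = proj_card (insert e Y)"
    unfolding ext_def by (rule sum_card_extensions) auto
  have ge: "\<forall>x \<in> proj Y ` C. 1 \<le> ext x"
    unfolding ext_def using finite_code
    by (auto simp: Suc_le_eq card_gt_0_iff restrict_proj[of Y "insert e Y"] subset_insertI)
  have le: "\<forall>x \<in> proj Y ` C. ext x \<le> q"
    unfolding ext_def using card_extensions_le[OF assms(2)] by blast
  have "insert e Y \<subseteq> E" using assms by auto
  then consider "proj_card (insert e Y) = proj_card Y" | "proj_card (insert e Y) = q * proj_card Y"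
    using rk_insert[OF assms(1,2)] assms(1) q_gt_1
    by (fastforce simp: proj_card_eq_power le_Suc_eq)
  then show ?thesis
  proof cases
    case 1
    then have "ext x = 1"
      using sum ge assms(3) finite_code unfolding proj_card_def
      by (intro eq_const_if_sum_eq_lower[of "proj Y ` C" 1 ext]) auto
    with 1 show ?thesis unfolding ext_def by simp
  next
    case 2
    then have "ext x = q"
      using sum le assms(3) finite_code unfolding proj_card_def
      by (intro eq_const_if_sum_eq_upper[of "proj Y ` C" ext q]) auto
    with 2 show ?thesis unfolding ext_def by simp
  qed
qed

lemma card_fiber_mult_of_insert:
  assumes "Y \<subseteq> E" "e \<in> E" "c \<in> C"
    and insert_fibers: "\<And>c'. c' \<in> C \<Longrightarrow> card (fiber (insert e Y) c') * proj_card (insert e Y) = card C"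
  shows "card (fiber Y c) * proj_card Y = card C"
proof -
  let ?Y' = "insert e Y"
  let ?Ext = "{y \<in> proj ?Y' ` C. restrict y Y = proj Y c}"
  have Y': "Y \<subseteq> ?Y'" by blast
  have "proj ?Y' ` fiber Y c = ?Ext"
    unfolding fiber_def by (auto simp: restrict_proj[OF Y'])
  then have "card (fiber Y c) = (\<Sum>y \<in> ?Ext. card {c' \<in> fiber Y c. proj ?Y' c' = y})"
    using card_eq_sum_card_fibers[of "fiber Y c" "proj ?Y'"] finite_code by (simp add: fiber_def)
  then have "card (fiber Y c) * proj_card ?Y'
      = (\<Sum>y \<in> ?Ext. card {c' \<in> fiber Y c. proj ?Y' c' = y} * proj_card ?Y')"
    by (simp add: sum_distrib_right)
  also have "\<dots> = (\<Sum>y \<in> ?Ext. card C)"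
  proof (rule sum.cong[OF refl])
    fix y assume "y \<in> ?Ext"
    then obtain c' where c': "c' \<in> C" "y = proj ?Y' c'" "proj Y c' = proj Y c"
      by (auto simp: restrict_proj[OF Y'])
    have "proj Y c'' = proj Y c" if "proj ?Y' c'' = proj ?Y' c'" for c''
      using that c'(3) restrict_proj[OF Y'] by metis
    then have "{c'' \<in> fiber Y c. proj ?Y' c'' = y} = fiber ?Y' c'"
      unfolding fiber_def c'(2) by auto
    then show "card {c'' \<in> fiber Y c. proj ?Y' c'' = y} * proj_card ?Y' = card C"
      using insert_fibers[OF c'(1)] by simp
  qed
  finally have fib: "card (fiber Y c) * proj_card ?Y' = card ?Ext * card C" by simp
  have ext: "card ?Ext * proj_card Y = proj_card ?Y'"
    using card_extensions[OF assms(1,2)] assms(3) by blast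
  have "(card (fiber Y c) * proj_card Y) * proj_card ?Y' = (card (fiber Y c) * proj_card ?Y') * proj_card Y"
    by (simp only: ac_simps)
  also have "\<dots> = card C * (card ?Ext * proj_card Y)" unfolding fib by (simp only: ac_simps)
  also have "\<dots> = card C * proj_card ?Y'" unfolding ext ..
  finally show ?thesis using proj_card_pos[of ?Y'] by simp
qed

lemma card_fiber_mult:
  assumes "Y \<subseteq> E" "c \<in> C"
  shows "card (fiber Y c) * proj_card Y = card C"
  using assms
proof (induction "card (E - Y)" arbitrary: Y c)
  case 0
  have "Y = E"
    using 0 card_0_eq[of "E - Y"] by auto
  have "fiber E c = {c}"
    using proj_ground 0(3) by (auto simp: fiber_def)
  with \<open>Y = E\<close> show ?case using proj_card_ground by simp
next
  case (Suc d)
  have "card (E - Y) \<noteq> 0" using Suc.hyps(2)[symmetric] by simp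
  then have "E - Y \<noteq> {}" by auto
  then obtain e where e: "e \<in> E" "e \<notin> Y" by blast
  have "E - insert e Y = (E - Y) - {e}" by auto
  then have "card (E - insert e Y) = card (E - Y) - 1" using e by simp
  then have "d = card (E - insert e Y)" using Suc.hyps(2) by linarith
  moreover have "insert e Y \<subseteq> E" using Suc.prems(1) e(1) by blast
  ultimately show ?case
    by (rule card_fiber_mult_of_insert[OF Suc.prems(1) e(1) Suc.prems(2) Suc.hyps(1)])
qed

lemma card_fiber:
  assumes "Y \<subseteq> E" "c \<in> C"
  shows "card (fiber Y c) = q ^ (k - rk Y)"
proof -
  have "card (fiber Y c) * q ^ rk Y = q ^ (k - rk Y) * q ^ rk Y"
    using card_fiber_mult[OF assms] proj_card_eq_power[OF assms(1)] card_code rk_le[OF assms(1)]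
    by (simp flip: power_add)
  then show ?thesis using q_gt_1 by simp
qed

lemma rk_insert_eq_iff:
  assumes "Y \<subseteq> E" "e \<in> E"
  shows "rk (insert e Y) = rk Y \<longleftrightarrow> (\<forall>c \<in> C. \<forall>c' \<in> C. proj Y c = proj Y c' \<longrightarrow> c e = c' e)"
    (is "?eq \<longleftrightarrow> ?determined")
proof
  assume ?eq
  show ?determined
  proof (intro ballI impI)
    fix c c' assume c: "c \<in> C" "c' \<in> C" "proj Y c = proj Y c'"
    have "fiber (insert e Y) c \<subseteq> fiber Y c"
      unfolding fiber_def by (auto simp: proj_eq_iff)
    moreover have "card (fiber (insert e Y) c) = card (fiber Y c)"
      using card_fiber[OF _ c(1)] assms \<open>?eq\<close> by simp
    ultimately have "fiber (insert e Y) c = fiber Y c"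
      using finite_code by (intro card_subset_eq) (auto simp: fiber_def)
    moreover have "c' \<in> fiber Y c" using c unfolding fiber_def by simp
    ultimately have "proj (insert e Y) c' = proj (insert e Y) c" unfolding fiber_def by blast
    then show "c e = c' e" by (simp add: proj_eq_iff)
  qed
next
  assume det: ?determined
  have "inj_on (\<lambda>y. restrict y Y) (proj (insert e Y) ` C)"
  proof (rule inj_onI)
    fix y y' assume "y \<in> proj (insert e Y) ` C" "y' \<in> proj (insert e Y) ` C"
      and eq: "restrict y Y = restrict y' Y"
    then obtain c c' where c: "c \<in> C" "c' \<in> C" "y = proj (insert e Y) c" "y' = proj (insert e Y) c'"
      by blast
    then have "proj Y c = proj Y c'" using eq by (simp add: restrict_proj[OF subset_insertI])
    with det c have "c e = c' e" by blast
    with \<open>proj Y c = proj Y c'\<close> show "y = y'" unfolding c(3,4) by (simp add: proj_eq_iff)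
  qed
  moreover have "(\<lambda>y. restrict y Y) ` proj (insert e Y) ` C = proj Y ` C"
    by (simp add: image_image restrict_proj[OF subset_insertI])
  ultimately have "proj_card (insert e Y) = proj_card Y"
    unfolding proj_card_def by (metis card_image)
  then show ?eq using assms by (simp add: rk_eq_iff)
qed

lemma rk_insert_eq_mono:
  assumes "Z \<subseteq> Y" "Y \<subseteq> E" "e \<in> E" "rk (insert e Z) = rk Z"
  shows "rk (insert e Y) = rk Y"
proof -
  have "Z \<subseteq> E" using assms(1,2) by blast
  with assms(3,4) have detZ: "\<forall>c \<in> C. \<forall>c' \<in> C. proj Z c = proj Z c' \<longrightarrow> c e = c' e"
    using rk_insert_eq_iff by blast
  have "proj Z c = proj Z c'" if "proj Y c = proj Y c'" for c c'
    using that assms(1) by (auto simp: proj_eq_iff)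
  with detZ have "\<forall>c \<in> C. \<forall>c' \<in> C. proj Y c = proj Y c' \<longrightarrow> c e = c' e" by blast
  with assms(2,3) show ?thesis using rk_insert_eq_iff by blast
qed

lemma basis_rank:
  assumes "code_basis A n C B"
  shows "rk B = k" "card B = k"
proof -
  have B: "B \<subseteq> E" "rk B = card B"
    using assms code_rank_eq unfolding code_basis_def by auto
  have "rk B = k"
  proof (cases "\<forall>e \<in> E. rk (insert e B) = rk B")
    case True
    have "inj_on (proj B) C"
    proof (rule inj_onI)
      fix c c' assume c: "c \<in> C" "c' \<in> C" "proj B c = proj B c'"
      with True rk_insert_eq_iff[OF B(1)] have "proj E c = proj E c'"
        by (auto simp: proj_eq_iff)
      with c show "c = c'" using proj_ground by simp
    qed
    then have "proj_card B = card C" unfolding proj_card_def by (simp add: card_image)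
    then show ?thesis using rk_eq_iff[OF B(1), of E] proj_card_ground rk_ground by simp
  next
    case False
    then obtain e where e: "e \<in> E" "rk (insert e B) \<noteq> rk B" by blast
    then have "e \<notin> B" by (auto simp: insert_absorb)
    have "rk (insert e B) = rk B + 1" using rk_insert[OF B(1) e(1)] e(2) by simp
    then have "code_rank A C (insert e B) = real (card (insert e B))"
      using B e \<open>e \<notin> B\<close> code_rank_eq finite_subset[OF B(1)] by simp
    moreover have "B \<subset> insert e B" "insert e B \<subseteq> E" using e \<open>e \<notin> B\<close> B by auto
    ultimately show ?thesis using assms unfolding code_basis_def by blast
  qed
  with B show "rk B = k" "card B = k" by auto
qed

end

section \<open>The randomised code\<close>

locale coset_code_model = almost_affine_code +
  fixes B :: "nat set" and \<phi> :: "'a \<Rightarrow> 'a \<Rightarrow> 'a" and X :: "nat set"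
  assumes basis: "code_basis A n C B"
    and latin: "\<forall>y \<in> A. bij_betw (\<phi> y) A A \<and> bij_betw (\<lambda>x. \<phi> x y) A A"
    and X_subset: "X \<subseteq> E - B"
begin

abbreviation messages :: "(nat \<Rightarrow> 'a) set" where
  "messages \<equiv> PiE (E - B) (\<lambda>_. A)"

definition encode :: "(nat \<Rightarrow> 'a) \<times> (nat \<Rightarrow> 'a) \<Rightarrow> (nat \<Rightarrow> 'a) \<times> (nat \<Rightarrow> 'a)" where
  "encode = (\<lambda>(m, c). (m, Phi \<phi> n B m c))"

definition observe :: "nat set \<Rightarrow> (nat \<Rightarrow> 'a) \<times> (nat \<Rightarrow> 'a) \<Rightarrow> (nat \<Rightarrow> 'a) \<times> (nat \<Rightarrow> 'a)" where
  "observe Y = (\<lambda>(m, w). (proj Y w, proj X m))"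

lemma basis_subset: "B \<subseteq> E"
  using basis unfolding code_basis_def by blast

lemma card_nonbasis: "card (E - B) = n - k"
  using basis_rank(2)[OF basis] basis_subset by (simp add: card_Diff_subset finite_subset)

lemma finite_messages: "finite messages"
  using finite_alphabet by (simp add: finite_PiE)

lemma messages_nonempty: "messages \<noteq> {}"
  using card_alphabet by (auto simp: PiE_eq_empty_iff)

lemma message_mem: "m \<in> messages \<Longrightarrow> i \<in> E - B \<Longrightarrow> m i \<in> A"
  by (auto simp: PiE_iff)

lemma latin_left_inj:
  "y \<in> A \<Longrightarrow> x \<in> A \<Longrightarrow> x' \<in> A \<Longrightarrow> \<phi> x y = \<phi> x' y \<longleftrightarrow> x = x'"
  using latin by (auto simp: bij_betw_def inj_on_def)

lemma Phi_apply: "i \<in> E \<Longrightarrow> Phi \<phi> n B m c i = (if i \<in> B then c i else \<phi> (c i) (m i))"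
  by (simp add: Phi_def)

lemma proj_Phi_eq_iff:
  assumes "Y \<subseteq> E" "m \<in> messages" "c \<in> C" "c' \<in> C"
  shows "proj Y (Phi \<phi> n B m c) = proj Y (Phi \<phi> n B m c') \<longleftrightarrow> proj Y c = proj Y c'"
  using assms code_mem message_mem latin_left_inj by (auto simp: proj_eq_iff Phi_apply subset_iff)

lemma inj_on_Phi:
  assumes "m \<in> messages"
  shows "inj_on (Phi \<phi> n B m) C"
proof (rule inj_onI)
  fix c c' assume c: "c \<in> C" "c' \<in> C" "Phi \<phi> n B m c = Phi \<phi> n B m c'"
  then have "proj E c = proj E c'" using proj_Phi_eq_iff[OF order.refl assms c(1,2)] by simp
  with c show "c = c'" by (metis proj_ground)
qed

lemma model_pmf_eq: "model_pmf A \<phi> n B C = map_pmf encode (pmf_of_set (messages \<times> C))"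
proof -
  have "model_pmf A \<phi> n B C =
      bind_pmf (pmf_of_set messages) (\<lambda>m. map_pmf (\<lambda>c. encode (m, c)) (pmf_of_set C))"
    unfolding model_pmf_def
  proof (rule bind_pmf_cong[OF refl])
    fix m assume "m \<in> set_pmf (pmf_of_set messages)"
    then have "m \<in> messages" using finite_messages messages_nonempty by simp
    then have "pmf_of_set (code_m \<phi> n B C m) = map_pmf (Phi \<phi> n B m) (pmf_of_set C)"
      unfolding code_m_def using map_pmf_of_set_inj[OF inj_on_Phi] code_nonempty finite_code by simp
    then show "map_pmf (Pair m) (pmf_of_set (code_m \<phi> n B C m)) = map_pmf (\<lambda>c. encode (m, c)) (pmf_of_set C)"
      by (simp add: map_pmf_comp encode_def)
  qed
  also have "\<dots> = map_pmf encode (pair_pmf (pmf_of_set messages) (pmf_of_set C))"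
    unfolding pair_pmf_def by (simp add: map_pmf_def bind_assoc_pmf bind_return_pmf)
  also have "\<dots> = map_pmf encode (pmf_of_set (messages \<times> C))"
    using pmf_of_set_Times[OF finite_messages messages_nonempty finite_code code_nonempty] by simp
  finally show ?thesis .
qed

lemma card_joint_fiber:
  assumes "Y \<subseteq> E" "m0 \<in> messages" "c0 \<in> C"
  shows "card {x \<in> messages \<times> C. (fst x, observe Y (encode x)) = (m0, observe Y (encode (m0, c0)))}
    = card (fiber Y c0)"
proof -
  have "{x \<in> messages \<times> C. (fst x, observe Y (encode x)) = (m0, observe Y (encode (m0, c0)))}
      = Pair m0 ` fiber Y c0"
    using proj_Phi_eq_iff[OF assms(1,2) _ assms(3)] assms(2)
    by (auto simp: observe_def encode_def fiber_def)
  then show ?thesis by (simp add: card_image inj_on_def)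
qed

lemma observe_encode_eq_iff:
  assumes "Y \<subseteq> E" "m0 \<in> messages" "c0 \<in> C" "m \<in> messages" "c \<in> C"
  shows "observe Y (encode (m, c)) = observe Y (encode (m0, c0)) \<longleftrightarrow>
    c \<in> fiber (Y \<inter> (B \<union> X)) c0 \<and>
    (\<forall>i \<in> E - B. if i \<in> X then m i = m0 i else i \<in> Y \<longrightarrow> \<phi> (c i) (m i) = \<phi> (c0 i) (m0 i))"
proof -
  have coord: "((i \<in> Y \<longrightarrow> Phi \<phi> n B m c i = Phi \<phi> n B m0 c0 i) \<and> (i \<in> X \<longrightarrow> m i = m0 i)) \<longleftrightarrow>
      ((i \<in> Y \<inter> (B \<union> X) \<longrightarrow> c i = c0 i) \<and>
       (i \<notin> B \<longrightarrow> (if i \<in> X then m i = m0 i else i \<in> Y \<longrightarrow> \<phi> (c i) (m i) = \<phi> (c0 i) (m0 i))))"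
    if i: "i \<in> E" for i
  proof (cases "i \<in> X")
    case True
    then have "i \<notin> B" "m0 i \<in> A" "c i \<in> A" "c0 i \<in> A"
      using X_subset i message_mem[OF assms(2)] code_mem assms(3,5) by auto
    with True i show ?thesis using latin_left_inj[of "m0 i" "c i" "c0 i"] by (auto simp: Phi_apply)
  qed (use i in \<open>auto simp: Phi_apply\<close>)
  have "observe Y (encode (m, c)) = observe Y (encode (m0, c0)) \<longleftrightarrow>
      (\<forall>i \<in> E. (i \<in> Y \<longrightarrow> Phi \<phi> n B m c i = Phi \<phi> n B m0 c0 i) \<and> (i \<in> X \<longrightarrow> m i = m0 i))"
    using assms(1) X_subset by (auto simp: observe_def encode_def proj_eq_iff)
  also have "\<dots> \<longleftrightarrow> (\<forall>i \<in> E. (i \<in> Y \<inter> (B \<union> X) \<longrightarrow> c i = c0 i) \<and>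
       (i \<notin> B \<longrightarrow> (if i \<in> X then m i = m0 i else i \<in> Y \<longrightarrow> \<phi> (c i) (m i) = \<phi> (c0 i) (m0 i))))"
    using coord by blast
  also have "\<dots> \<longleftrightarrow> c \<in> fiber (Y \<inter> (B \<union> X)) c0 \<and>
    (\<forall>i \<in> E - B. if i \<in> X then m i = m0 i else i \<in> Y \<longrightarrow> \<phi> (c i) (m i) = \<phi> (c0 i) (m0 i))"
    using assms(1,5) by (auto simp: fiber_def proj_eq_iff)
  finally show ?thesis .
qed

lemma card_compatible_messages:
  assumes "m0 \<in> messages" "c0 \<in> C" "c \<in> C"
  shows "card {m \<in> messages. \<forall>i \<in> E - B.
      if i \<in> X then m i = m0 i else i \<in> Y \<longrightarrow> \<phi> (c i) (m i) = \<phi> (c0 i) (m0 i)}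
    = q ^ card ((E - B) - (X \<union> Y))"
proof -
  have "card {a \<in> A. if i \<in> X then a = m0 i else i \<in> Y \<longrightarrow> \<phi> (c i) a = \<phi> (c0 i) (m0 i)}
      = (if i \<in> X \<union> Y then 1 else q)" if i: "i \<in> E - B" for i
  proof -
    have A: "m0 i \<in> A" "c i \<in> A" "c0 i \<in> A"
      using i message_mem[OF assms(1)] code_mem assms(2,3) by auto
    then have "\<phi> (c0 i) (m0 i) \<in> A" using latin by (auto simp: bij_betw_def)
    then have "card {a \<in> A. \<phi> (c i) a = \<phi> (c0 i) (m0 i)} = 1"
      using latin A by (intro card_bij_betw_fiber) auto
    moreover have "{a \<in> A. a = m0 i} = {m0 i}" using A by auto
    ultimately show ?thesis by (cases "i \<in> X"; cases "i \<in> Y") simp_all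
  qed
  then have "card {m \<in> messages. \<forall>i \<in> E - B.
      if i \<in> X then m i = m0 i else i \<in> Y \<longrightarrow> \<phi> (c i) (m i) = \<phi> (c0 i) (m0 i)}
    = (\<Prod>i \<in> E - B. if i \<in> X \<union> Y then 1 else q)"
    using card_filter_PiE[of "E - B" "\<lambda>_. A"
        "\<lambda>i a. if i \<in> X then a = m0 i else i \<in> Y \<longrightarrow> \<phi> (c i) a = \<phi> (c0 i) (m0 i)"]
    by simp
  also have "\<dots> = q ^ card ((E - B) - (X \<union> Y))"
    by (simp add: prod.If_cases Diff_eq Int_assoc Compl_eq[symmetric] Collect_disj_eq)
  finally show ?thesis .
qed

lemma card_observation_fiber:
  assumes "Y \<subseteq> E" "m0 \<in> messages" "c0 \<in> C"
  shows "card {x \<in> messages \<times> C. observe Y (encode x) = observe Y (encode (m0, c0))}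
    = card (fiber (Y \<inter> (B \<union> X)) c0) * q ^ card ((E - B) - (X \<union> Y))"
proof -
  define M where "M c = {m \<in> messages. \<forall>i \<in> E - B.
      if i \<in> X then m i = m0 i else i \<in> Y \<longrightarrow> \<phi> (c i) (m i) = \<phi> (c0 i) (m0 i)}" for c
  have "{x \<in> messages \<times> C. observe Y (encode x) = observe Y (encode (m0, c0))}
      = (\<lambda>(c, m). (m, c)) ` (SIGMA c : fiber (Y \<inter> (B \<union> X)) c0. M c)"
    using observe_encode_eq_iff[OF assms] by (auto simp: M_def fiber_def)
  then have "card {x \<in> messages \<times> C. observe Y (encode x) = observe Y (encode (m0, c0))}
      = card (SIGMA c : fiber (Y \<inter> (B \<union> X)) c0. M c)"
    by (simp add: card_image inj_on_def)
  also have "\<dots> = (\<Sum>c \<in> fiber (Y \<inter> (B \<union> X)) c0. card (M c))"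
    using finite_code finite_messages by (intro card_SigmaI) (auto simp: fiber_def M_def)
  also have "\<dots> = card (fiber (Y \<inter> (B \<union> X)) c0) * q ^ card ((E - B) - (X \<union> Y))"
    using card_compatible_messages[OF assms(2,3)] by (simp add: M_def fiber_def)
  finally show ?thesis .
qed

lemma fst_encode [simp]: "fst (encode x) = fst x"
  by (cases x) (simp add: encode_def)

lemma H_mtM_eq:
  assumes Y: "Y \<subseteq> E"
  shows "H_mtM A \<phi> n B C X Y
    = real (rk Y) + real (card ((E - B) - (X \<union> Y))) - real (rk (Y \<inter> (B \<union> X)))"
proof -
  let ?P = "messages \<times> C"
  let ?p = "map_pmf encode (pmf_of_set ?P)"
  let ?Z = "Y \<inter> (B \<union> X)" and ?e = "card ((E - B) - (X \<union> Y))"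
  have P: "finite ?P" "?P \<noteq> {}"
    using finite_messages finite_code messages_nonempty code_nonempty by auto
  have "H_mtM A \<phi> n B C X Y = cond_entropy q ?p fst (observe Y)"
    unfolding H_mtM_def observe_def model_pmf_eq ..
  also have "\<dots> = real (k - rk ?Z) + real ?e - real (k - rk Y)"
  proof (rule cond_entropy_eq_const)
    show "finite (set_pmf ?p)" using P by simp
    fix z assume z: "z \<in> set_pmf (map_pmf (\<lambda>\<omega>. (fst \<omega>, observe Y \<omega>)) ?p)"
    have "set_pmf (map_pmf (\<lambda>\<omega>. (fst \<omega>, observe Y \<omega>)) ?p) = (\<lambda>x. (fst x, observe Y (encode x))) ` ?P"
      using P by (simp add: image_image)
    with z obtain x where x: "x \<in> ?P" "z = (fst x, observe Y (encode x))" by blast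
    obtain m0 c0 where "x = (m0, c0)" by (cases x)
    with x have mc: "m0 \<in> messages" "c0 \<in> C" "z = (m0, observe Y (encode (m0, c0)))" by auto
    have "pmf (map_pmf (\<lambda>\<omega>. (fst \<omega>, observe Y \<omega>)) ?p) z
        = real (card {x \<in> ?P. (fst x, observe Y (encode x)) = z}) / real (card ?P)"
      unfolding map_pmf_comp o_def fst_encode by (rule pmf_map_pmf_of_set[OF P])
    also have "\<dots> = real (q ^ (k - rk Y)) / real (card ?P)"
      using card_joint_fiber[OF Y mc(1,2)] card_fiber[OF Y mc(2)] by (simp only: mc(3))
    finally have joint: "pmf (map_pmf (\<lambda>\<omega>. (fst \<omega>, observe Y \<omega>)) ?p) z = real (q ^ (k - rk Y)) / real (card ?P)" .
    have "pmf (map_pmf (observe Y) ?p) (snd z)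
        = real (card {x \<in> ?P. observe Y (encode x) = snd z}) / real (card ?P)"
      unfolding map_pmf_comp o_def by (rule pmf_map_pmf_of_set[OF P])
    also have "\<dots> = real (q ^ (k - rk ?Z) * q ^ ?e) / real (card ?P)"
      using card_observation_fiber[OF Y mc(1,2)] card_fiber[OF _ mc(2), of ?Z] Y
      by (simp only: mc(3) snd_conv) auto
    finally have obs: "pmf (map_pmf (observe Y) ?p) (snd z) = real (q ^ (k - rk ?Z) * q ^ ?e) / real (card ?P)" .
    have "real (card ?P) \<noteq> 0" using P by simp
    with joint obs show "log q (pmf (map_pmf (observe Y) ?p) (snd z) / pmf (map_pmf (\<lambda>\<omega>. (fst \<omega>, observe Y \<omega>)) ?p) z)
        = real (k - rk ?Z) + real ?e - real (k - rk Y)"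
      using log_ratio_of_powers[OF q_gt_1] by simp
  qed
  also have "\<dots> = real (rk Y) + real ?e - real (rk ?Z)"
  proof -
    have "?Z \<subseteq> E" using Y by auto
    then show ?thesis using rk_le[OF Y] rk_le[OF \<open>?Z \<subseteq> E\<close>] by (simp add: of_nat_diff)
  qed
  finally show ?thesis .
qed

section \<open>Demi-matroid rank and the main theorem\<close>

definition rho_X :: "nat set \<Rightarrow> int" where
  "rho_X Y = int (card (Y - (B \<union> X))) + int (rk (Y \<inter> (B \<union> X))) - int (rk Y)"

lemma k_le_n: "k \<le> n"
  using card_nonbasis card_mono[of E B] basis_subset basis_rank(2)[OF basis] by simp

lemma rho_eq: "Y \<subseteq> E \<Longrightarrow> rho A C B X Y = of_int (rho_X Y)"
proof -
  assume Y: "Y \<subseteq> E"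
  then have "Y \<inter> (B \<union> X) \<subseteq> E" by auto
  with Y show ?thesis
    unfolding rho_def rank_D_def rho_X_def by (simp add: code_rank_eq)
qed

lemma H_mtM_eq_rho:
  assumes Y: "Y \<subseteq> E"
  shows "H_mtM A \<phi> n B C X Y = real n - real k - real (card X) - of_int (rho_X Y)"
proof -
  let ?W = "Y - (B \<union> X)"
  have sub: "X \<union> ?W \<subseteq> E - B" using X_subset Y by auto
  have card_XW: "card (X \<union> ?W) = card X + card ?W"
    using finite_subset[OF X_subset] finite_subset[OF Y] by (intro card_Un_disjoint) auto
  have "(E - B) - (X \<union> Y) = (E - B) - (X \<union> ?W)" by auto
  also have "card \<dots> = card (E - B) - card (X \<union> ?W)"
    using sub by (intro card_Diff_subset) (auto intro: finite_subset)
  finally have "card ((E - B) - (X \<union> Y)) = n - k - (card X + card ?W)"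
    using card_nonbasis card_XW by simp
  moreover have "card X + card ?W \<le> n - k"
    using sub card_XW card_nonbasis card_mono[of "E - B" "X \<union> ?W"] by simp
  ultimately show ?thesis
    using H_mtM_eq[OF Y] k_le_n unfolding rho_X_def by (simp add: of_nat_diff)
qed

lemma rho_X_insert:
  assumes Y: "Y \<subseteq> E" and e: "e \<in> E"
  shows "rho_X Y \<le> rho_X (insert e Y) \<and> rho_X (insert e Y) \<le> rho_X Y + 1"
proof (cases "e \<in> Y")
  case False
  let ?Z = "Y \<inter> (B \<union> X)" and ?W = "Y - (B \<union> X)"
  have dY: "rk Y \<le> rk (insert e Y)" "rk (insert e Y) \<le> rk Y + 1" using rk_insert[OF Y e] by auto
  show ?thesis
  proof (cases "e \<in> B \<union> X")
    case False
    then have "insert e Y - (B \<union> X) = insert e ?W" "insert e Y \<inter> (B \<union> X) = ?Z" by auto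
    moreover have "card (insert e ?W) = card ?W + 1"
      using \<open>e \<notin> Y\<close> finite_subset[OF Y] by simp
    ultimately have "rho_X (insert e Y) = rho_X Y + 1 - (int (rk (insert e Y)) - int (rk Y))"
      unfolding rho_X_def by simp
    with dY show ?thesis by linarith
  next
    case True
    have Z: "?Z \<subseteq> Y" "?Z \<subseteq> E" using Y by auto
    have dZ: "rk ?Z \<le> rk (insert e ?Z)" "rk (insert e ?Z) \<le> rk ?Z + 1"
      using rk_insert[OF Z(2) e] by auto
    have closure: "rk (insert e ?Z) = rk ?Z \<Longrightarrow> rk (insert e Y) = rk Y"
      using rk_insert_eq_mono[OF Z(1) Y e] .
    from True have "insert e Y - (B \<union> X) = ?W" "insert e Y \<inter> (B \<union> X) = insert e ?Z" by auto
    then have "rho_X (insert e Y) = rho_X Y + (int (rk (insert e ?Z)) - int (rk ?Z)) - (int (rk (insert e Y)) - int (rk Y))"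
      unfolding rho_X_def by simp
    with dY dZ closure show ?thesis by linarith
  qed
qed (simp add: insert_absorb)

sublocale rho: unit_increasing rho_X E
proof
  show "finite E" by simp
  show "rho_X {} = 0" by (simp add: rho_X_def rk_empty)
  fix Y e assume "Y \<subseteq> E" "e \<in> E"
  then show "rho_X Y \<le> rho_X (insert e Y) \<and> rho_X (insert e Y) \<le> rho_X Y + 1"
    by (rule rho_X_insert)
qed

lemma rho_X_ground: "rho_X E = int (n - card X - k)"
proof -
  have BX: "B \<union> X \<subseteq> E" using X_subset basis_subset by auto
  have "rk (B \<union> X) = k"
    using rk_mono[of B "B \<union> X", OF _ BX] rk_le[OF BX] basis_rank(1)[OF basis] by simp
  moreover have "card (E - (B \<union> X)) = n - k - card X"
  proof -
    have "card (B \<union> X) = k + card X"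
      using basis_rank(2)[OF basis] X_subset finite_subset[OF BX] by (subst card_Un_disjoint) auto
    then show ?thesis using BX finite_subset[OF BX] by (simp add: card_Diff_subset)
  qed
  moreover have "E \<inter> (B \<union> X) = B \<union> X" using BX by auto
  ultimately show ?thesis unfolding rho_X_def using rk_ground by simp
qed

lemma sigma_eq_min_card_level:
  assumes "j \<le> n - card X - k + 1"
  shows "sigma A n k C B X j = min_card_level rho_X E (int j)"
proof (cases "j = n - card X - k + 1")
  case True
  have "rho_X Y \<noteq> int j" if "Y \<subseteq> E" for Y
    using rho.mono[OF that order.refl] rho_X_ground True by simp
  then have no_level: "{Y. Y \<subseteq> E \<and> rho_X Y = int j} = {}" by blast
  have "min_card_level rho_X E (int j) = \<infinity>"
    unfolding min_card_level_def no_level by (simp add: top_enat_def)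
  with True show ?thesis by (simp add: sigma_def)
next
  case False
  have "{Y. Y \<subseteq> E \<and> rho A C B X Y = real j} = {Y. Y \<subseteq> E \<and> rho_X Y = int j}"
    using rho_eq by auto
  with False show ?thesis by (simp add: sigma_def min_card_level_def)
qed

lemma Delta_mu_eq_iff:
  assumes "\<mu> \<le> n"
  shows "Delta_mu A \<phi> n k B C X \<mu> = real (card X + j) \<longleftrightarrow>
    (\<exists>Y \<subseteq> E. card Y = \<mu> \<and> rho_X Y = int j) \<and> (\<forall>Y \<subseteq> E. card Y = \<mu> \<longrightarrow> rho_X Y \<le> int j)"
proof -
  let ?S = "{H_mtM A \<phi> n B C X Y | Y. Y \<subseteq> E \<and> card Y = \<mu>}"
  let ?v = "real n - real k - real (card X) - real j"
  have fin: "finite ?S" by (rule finite_subset[of _ "(\<lambda>Y. H_mtM A \<phi> n B C X Y) ` Pow E"]) auto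
  have nonempty: "?S \<noteq> {}"
    using exists_subset_between[of "{}" \<mu> E] assms by auto
  have "Delta_mu A \<phi> n k B C X \<mu> = real (card X + j) \<longleftrightarrow> Min ?S = ?v"
    unfolding Delta_mu_def E_mu_def by auto
  also have "\<dots> \<longleftrightarrow> ?v \<in> ?S \<and> (\<forall>a \<in> ?S. ?v \<le> a)" by (rule Min_eq_iff[OF fin nonempty])
  also have "\<dots> \<longleftrightarrow> (\<exists>Y. Y \<subseteq> E \<and> card Y = \<mu> \<and> ?v = H_mtM A \<phi> n B C X Y) \<and>
      (\<forall>Y. Y \<subseteq> E \<and> card Y = \<mu> \<longrightarrow> ?v \<le> H_mtM A \<phi> n B C X Y)"
    by blast
  also have "\<dots> \<longleftrightarrow> (\<exists>Y \<subseteq> E. card Y = \<mu> \<and> rho_X Y = int j) \<and> (\<forall>Y \<subseteq> E. card Y = \<mu> \<longrightarrow> rho_X Y \<le> int j)"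
  proof -
    have "real j = of_int r \<longleftrightarrow> r = int j" "of_int r \<le> real j \<longleftrightarrow> r \<le> int j" for r :: int
      by linarith+
    then show ?thesis by (simp add: H_mtM_eq_rho cong: conj_cong) blast
  qed
  finally show ?thesis .
qed

end

theorem mainTheorem11:
  fixes A :: "'a set" and C :: "(nat \<Rightarrow> 'a) set" and n k :: nat
    and B X :: "nat set" and \<phi> :: "'a \<Rightarrow> 'a \<Rightarrow> 'a"
  assumes "finite A" and "card A \<ge> 2"
    and "almost_affine A n k C"
    and "code_basis A n C B"
    and "\<forall>y \<in> A. bij_betw (\<phi> y) A A \<and> bij_betw (\<lambda>x. \<phi> x y) A A"
    and "X \<subseteq> {1..n} - B"
  shows "\<forall>j \<le> n - card X - k. \<forall>\<mu> \<le> n.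
           Delta_mu A \<phi> n k B C X \<mu> = real (card X + j) \<longleftrightarrow>
           (sigma A n k C B X j \<le> enat \<mu> \<and> enat \<mu> < sigma A n k C B X (j + 1))"
proof (intro allI impI)
  interpret coset_code_model A n k C B \<phi> X
    using assms by unfold_locales
  fix j \<mu> assume j: "j \<le> n - card X - k" and \<mu>: "\<mu> \<le> n"
  have "Delta_mu A \<phi> n k B C X \<mu> = real (card X + j) \<longleftrightarrow>
      (\<exists>Y \<subseteq> {1..n}. card Y = \<mu> \<and> rho_X Y = int j) \<and> (\<forall>Y \<subseteq> {1..n}. card Y = \<mu> \<longrightarrow> rho_X Y \<le> int j)"
    by (rule Delta_mu_eq_iff[OF \<mu>])
  also have "\<dots> \<longleftrightarrow> min_card_level rho_X {1..n} (int j) \<le> enat \<mu> \<and> enat \<mu> < min_card_level rho_X {1..n} (int j + 1)"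
    using rho.max_eq_iff_min_card_level[of "int j" \<mu>] \<mu> by simp
  also have "\<dots> \<longleftrightarrow> sigma A n k C B X j \<le> enat \<mu> \<and> enat \<mu> < sigma A n k C B X (j + 1)"
  proof -
    have "sigma A n k C B X (j + 1) = min_card_level rho_X {1..n} (int j + 1)"
      using sigma_eq_min_card_level[of "j + 1"] j by (simp add: add.commute)
    moreover have "sigma A n k C B X j = min_card_level rho_X {1..n} (int j)"
      using sigma_eq_min_card_level[of j] j by simp
    ultimately show ?thesis by (simp only:)
  qed
  finally show "Delta_mu A \<phi> n k B C X \<mu> = real (card X + j) \<longleftrightarrow>
      (sigma A n k C B X j \<le> enat \<mu> \<and> enat \<mu> < sigma A n k C B X (j + 1))" .
qed

end
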